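(* Under the standing setting and assumptions (A1)–(A3) described in the context, assume $\mathcal A^\infty\cap\ker(\pi)=\{0\}$ (absence of scalable good deals). Then $\mathcal R(X)\neq\emptyset$ for every $X\in\mathcal X$.
   Context: Let $\mathcal X$ be a Hausdorff, first countable, locally convex topological vector space over $\mathbb R$, partially ordered by a partial order $\geq$ with positive cone $\mathcal X_+=\{X\in\mathcal X: X\geq 0\}$. Let $\mathcal M\subset\mathcal X$ be a vector subspace with $1<\dim\mathcal M<\infty$, carrying the relative topology, and let $\pi:\mathcal M\to\mathbb R$ be linear with $\ker(\pi)=\{Z\in\mathcal M:\pi(Z)=0\}$. Standing assumptions: (A1) there is $U\in\mathcal M\cap\mathcal X_+$ with $\pi(U)=1$; (A2) $\mathcal A\subsetneq\mathcal X$ is closed, contains $0$, and satisfies $\mathcal A+\mathcal X_+\subset\mathcal A$; (A3) the map $\rho(X)=\inf\{\pi(Z): Z\in\mathcal M,\ X+Z\in\mathcal A\}$ is finitely valued and continuous on $\mathcal X$. The optimal payoff map is $\mathcal R(X)=\{Z\in\mathcal M: X+Z\in\mathcal A,\ \pi(Z)=\rho(X)\}$. The asymptotic cone is $\mathcal A^\infty=\bigcap_{\varepsilon>0}\mathrm{cl}\{\lambda X:\lambda\in[0,\varepsilon],X\in\mathcal A\}$. *)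

theory Defs
  imports "HOL-Analysis.Analysis"
begin

text \<open>A real topological vector space whose topology is locally convex
  (Hausdorffness and first countability are imposed via type classes).\<close>
definition locally_convex_tvs :: "'a::{real_vector,topological_space} itself \<Rightarrow> bool" where
  "locally_convex_tvs _ \<longleftrightarrow>
     continuous_on UNIV (\<lambda>p::'a \<times> 'a. fst p + snd p) \<and>
     continuous_on UNIV (\<lambda>p::real \<times> 'a. fst p *\<^sub>R snd p) \<and>
     (\<forall>U::'a set. open U \<and> 0 \<in> U \<longrightarrow> (\<exists>V. open V \<and> convex V \<and> 0 \<in> V \<and> V \<subseteq> U))"

text \<open>Positive cone of the order ge (ge x y means x \<ge> y).\<close>
definition pos_cone :: "('a \<Rightarrow> 'a \<Rightarrow> bool) \<Rightarrow> 'a::zero set" where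
  "pos_cone ge = {x. ge x 0}"

definition rho :: "'a::real_vector set \<Rightarrow> 'a set \<Rightarrow> ('a \<Rightarrow> real) \<Rightarrow> 'a \<Rightarrow> real" where
  "rho A M \<pi> X = Inf {\<pi> Z | Z. Z \<in> M \<and> X + Z \<in> A}"

definition optimal_payoffs :: "'a::real_vector set \<Rightarrow> 'a set \<Rightarrow> ('a \<Rightarrow> real) \<Rightarrow> 'a \<Rightarrow> 'a set" where
  "optimal_payoffs A M \<pi> X = {Z \<in> M. X + Z \<in> A \<and> \<pi> Z = rho A M \<pi> X}"

definition asymptotic_cone :: "'a::{real_vector,topological_space} set \<Rightarrow> 'a set" where
  "asymptotic_cone A = (\<Inter>\<epsilon>\<in>{\<epsilon>::real. \<epsilon> > 0}.
      closure {l *\<^sub>R X | l X. l \<in> {0..\<epsilon>} \<and> X \<in> A})"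

end

theory Submission
  imports Defs
begin

text \<open>Take a minimizing sequence \<open>Z\<^sub>n\<close> for \<open>\<rho>(X)\<close> and write it in coordinates with
  respect to a basis of the finite-dimensional space \<open>\<M>\<close>. If the coordinates stay bounded,
  a convergent subsequence has a limit \<open>Z\<close> with \<open>X + Z \<in> \<A>\<close> (closedness) and
  \<open>\<pi>(Z) = \<rho>(X)\<close>, so \<open>Z\<close> is an optimal payoff. Otherwise, rescaling by the reciprocal size
  \<open>t\<^sub>n \<rightarrow> 0\<close> of the coordinates, a subsequence of \<open>t\<^sub>n (X + Z\<^sub>n) \<in> t\<^sub>n \<A>\<close> converges to a
  nonzero \<open>W \<in> \<M>\<close>; it lies in \<open>\<A>\<^sup>\<infinity>\<close> and \<open>\<pi>(W) = lim t\<^sub>n \<pi>(Z\<^sub>n) = 0\<close> because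
  \<open>\<pi>(Z\<^sub>n)\<close> is bounded, contradicting the absence of scalable good deals.\<close>

lemma tendsto_add_tvs:
  fixes f g :: "'b \<Rightarrow> 'a::{real_vector,topological_space}"
  assumes "locally_convex_tvs TYPE('a)" and "(f \<longlongrightarrow> a) F" and "(g \<longlongrightarrow> b) F"
  shows "((\<lambda>x. f x + g x) \<longlongrightarrow> a + b) F"
proof -
  have "continuous_on UNIV (\<lambda>p::'a \<times> 'a. fst p + snd p)"
    using assms(1) unfolding locally_convex_tvs_def by blast
  from continuous_on_tendsto_compose[OF this tendsto_Pair[OF assms(2,3)]] show ?thesis
    by (simp add: o_def)
qed

lemma tendsto_scaleR_tvs:
  fixes f :: "'b \<Rightarrow> real" and g :: "'b \<Rightarrow> 'a::{real_vector,topological_space}"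
  assumes "locally_convex_tvs TYPE('a)" and "(f \<longlongrightarrow> a) F" and "(g \<longlongrightarrow> b) F"
  shows "((\<lambda>x. f x *\<^sub>R g x) \<longlongrightarrow> a *\<^sub>R b) F"
proof -
  have "continuous_on UNIV (\<lambda>p::real \<times> 'a. fst p *\<^sub>R snd p)"
    using assms(1) unfolding locally_convex_tvs_def by blast
  from continuous_on_tendsto_compose[OF this tendsto_Pair[OF assms(2,3)]] show ?thesis
    by (simp add: o_def)
qed

lemma tendsto_lincomb_tvs:
  fixes B :: "'a::{real_vector,topological_space} set"
  assumes tvs: "locally_convex_tvs TYPE('a)" and "finite B"
    and "\<forall>v\<in>B. ((\<lambda>x. c x v) \<longlongrightarrow> d v) F"
  shows "((\<lambda>x. \<Sum>v\<in>B. c x v *\<^sub>R v) \<longlongrightarrow> (\<Sum>v\<in>B. d v *\<^sub>R v)) F"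
  using assms(2,3)
proof (induction B rule: finite_induct)
  case empty
  then show ?case by simp
next
  case (insert w B)
  then show ?case
    by (simp add: tendsto_add_tvs[OF tvs] tendsto_scaleR_tvs[OF tvs])
qed

lemma convergent_subseq_finite_family:
  fixes c :: "nat \<Rightarrow> 'i \<Rightarrow> real"
  assumes "finite I" and "\<forall>n. \<forall>i\<in>I. \<bar>c n i\<bar> \<le> K"
  obtains r d where "strict_mono r" "\<forall>i\<in>I. (\<lambda>n. c (r n) i) \<longlonglongrightarrow> d i"
proof -
  have "\<exists>r d. strict_mono r \<and> (\<forall>i\<in>I. (\<lambda>n. c (r n) i) \<longlonglongrightarrow> d i)"
    using assms
  proof (induction I rule: finite_induct)
    case empty
    then show ?case by (intro exI[of _ id]) (auto simp: strict_mono_def)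
  next
    case (insert j I)
    then obtain r d where r: "strict_mono r" and d: "\<forall>i\<in>I. (\<lambda>n. c (r n) i) \<longlonglongrightarrow> d i"
      by auto
    have "bounded (range (\<lambda>n. c (r n) j))"
      using insert.prems by (intro boundedI[of _ K]) auto
    then obtain l r' where r': "strict_mono r'" and l: "((\<lambda>n. c (r n) j) \<circ> r') \<longlonglongrightarrow> l"
      using bounded_imp_convergent_subsequence by blast
    have "\<forall>i\<in>I. ((\<lambda>n. c (r n) i) \<circ> r') \<longlonglongrightarrow> d i"
      using d r' LIMSEQ_subseq_LIMSEQ by blast
    then have "\<forall>i\<in>insert j I. (\<lambda>n. c ((r \<circ> r') n) i) \<longlonglongrightarrow> (d(j := l)) i"
      using l by (auto simp: o_def)
    with r r' show ?case using strict_mono_o by blast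
  qed
  then show thesis using that by blast
qed

lemma unbounded_finite_family_normalization:
  fixes c :: "nat \<Rightarrow> 'i \<Rightarrow> real"
  assumes I: "finite I" and unbounded: "\<not> (\<exists>K. \<forall>n. \<forall>i\<in>I. \<bar>c n i\<bar> \<le> K)"
  obtains \<sigma> t where "\<forall>n. t n > 0" "t \<longlonglongrightarrow> 0" "\<forall>n. (\<Sum>i\<in>I. \<bar>t n * c (\<sigma> n) i\<bar>) = 1 - t n"
proof -
  define s where "s n = 1 + (\<Sum>i\<in>I. \<bar>c n i\<bar>)" for n
  have s_pos: "s n > 0" for n
    unfolding s_def by (simp add: add_pos_nonneg sum_nonneg)
  have c_le_s: "\<bar>c n i\<bar> \<le> s n" if "i \<in> I" for n i
    unfolding s_def using I that member_le_sum[of i I "\<lambda>i. \<bar>c n i\<bar>"] by simp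
  have "\<exists>m. real (Suc n) \<le> s m" for n
  proof (rule ccontr)
    assume "\<nexists>m. real (Suc n) \<le> s m"
    then have "\<forall>m. \<forall>i\<in>I. \<bar>c m i\<bar> \<le> real (Suc n)"
      using c_le_s by (meson not_le order.trans less_imp_le)
    with unbounded show False
      by blast
  qed
  then obtain \<sigma> where \<sigma>: "\<And>n. real (Suc n) \<le> s (\<sigma> n)"
    by metis
  define t where "t n = inverse (s (\<sigma> n))" for n
  have t_pos: "t n > 0" for n
    unfolding t_def using s_pos by simp
  have "t n \<le> inverse (real (Suc n))" for n
    unfolding t_def using \<sigma>[of n] by (simp add: le_imp_inverse_le)
  then have "t \<longlonglongrightarrow> 0"
    using t_pos LIMSEQ_inverse_real_of_nat
    by (intro tendsto_sandwich[of "\<lambda>_. 0" t _ "\<lambda>n. inverse (real (Suc n))"])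
      (auto intro!: always_eventually less_imp_le)
  moreover have "(\<Sum>i\<in>I. \<bar>t n * c (\<sigma> n) i\<bar>) = 1 - t n" for n
  proof -
    have "(\<Sum>i\<in>I. \<bar>t n * c (\<sigma> n) i\<bar>) = t n * (s (\<sigma> n) - 1)"
      using t_pos[of n] by (simp add: abs_mult sum_distrib_left s_def)
    also have "\<dots> = 1 - t n"
      using s_pos[of "\<sigma> n"] by (simp add: t_def field_simps)
    finally show ?thesis .
  qed
  ultimately show thesis
    using that t_pos by blast
qed

lemma unbounded_finite_family_normalized_limit:
  fixes c :: "nat \<Rightarrow> 'i \<Rightarrow> real"
  assumes I: "finite I" and unbounded: "\<not> (\<exists>K. \<forall>n. \<forall>i\<in>I. \<bar>c n i\<bar> \<le> K)"
  obtains \<sigma> t d where "\<forall>n. t n > 0" "t \<longlonglongrightarrow> 0"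
    "\<forall>i\<in>I. (\<lambda>n. t n * c (\<sigma> n) i) \<longlonglongrightarrow> d i" "\<exists>i\<in>I. d i \<noteq> 0"
proof -
  obtain \<sigma> t where t_pos: "\<forall>n. t n > 0" and t: "t \<longlonglongrightarrow> 0"
    and abs_sum: "\<forall>n. (\<Sum>i\<in>I. \<bar>t n * c (\<sigma> n) i\<bar>) = 1 - t n"
    by (rule unbounded_finite_family_normalization[OF I unbounded])
  have "\<bar>t n * c (\<sigma> n) i\<bar> \<le> 1" if "i \<in> I" for n i
  proof -
    have "\<bar>t n * c (\<sigma> n) i\<bar> \<le> (\<Sum>i\<in>I. \<bar>t n * c (\<sigma> n) i\<bar>)"
      using I that by (intro member_le_sum) auto
    also have "\<dots> \<le> 1"
      using abs_sum t_pos by (simp add: less_imp_le)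
    finally show ?thesis .
  qed
  then obtain r d where r: "strict_mono r" and d: "\<forall>i\<in>I. (\<lambda>n. t (r n) * c (\<sigma> (r n)) i) \<longlonglongrightarrow> d i"
    using convergent_subseq_finite_family[OF I, of "\<lambda>n i. t n * c (\<sigma> n) i" 1] by blast
  have t_r: "(\<lambda>n. t (r n)) \<longlonglongrightarrow> 0"
    using LIMSEQ_subseq_LIMSEQ[OF t r] by (simp add: o_def)
  have "(\<lambda>n. \<Sum>i\<in>I. \<bar>t (r n) * c (\<sigma> (r n)) i\<bar>) \<longlonglongrightarrow> (\<Sum>i\<in>I. \<bar>d i\<bar>)"
    using d by (intro tendsto_sum tendsto_rabs) auto
  moreover have "(\<lambda>n. \<Sum>i\<in>I. \<bar>t (r n) * c (\<sigma> (r n)) i\<bar>) \<longlonglongrightarrow> 1"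
    using tendsto_diff[OF tendsto_const t_r, of 1] abs_sum by simp
  ultimately have "(\<Sum>i\<in>I. \<bar>d i\<bar>) = 1"
    by (rule LIMSEQ_unique)
  then have "\<exists>i\<in>I. d i \<noteq> 0"
    by (metis abs_zero sum.neutral zero_neq_one)
  with that[of "t \<circ> r" "\<sigma> \<circ> r" d] t_pos t_r d show thesis
    by (simp add: o_def)
qed

lemma finite_basis_of_span:
  fixes B0 :: "'a::real_vector set"
  assumes "finite B0" and "M = span B0"
  obtains B where "finite B" "independent B" "M = span B"
proof -
  obtain B where "B \<subseteq> B0" "independent B" "B0 \<subseteq> span B"
    using maximal_independent_subset by blast
  moreover have "span B = span B0"
    unfolding span_eq using \<open>B \<subseteq> B0\<close> \<open>B0 \<subseteq> span B\<close> span_superset by blast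
  ultimately show thesis
    using that assms finite_subset by blast
qed

lemma sum_scaleR_linear_on_span:
  fixes \<pi> :: "'a::real_vector \<Rightarrow> real"
  assumes M: "subspace M" and add: "\<forall>Z\<in>M. \<forall>W\<in>M. \<pi> (Z + W) = \<pi> Z + \<pi> W"
    and scale: "\<forall>Z\<in>M. \<forall>c::real. \<pi> (c *\<^sub>R Z) = c * \<pi> Z"
    and "finite B" "B \<subseteq> M"
  shows "\<pi> (\<Sum>v\<in>B. u v *\<^sub>R v) = (\<Sum>v\<in>B. u v * \<pi> v)"
  using assms(4,5)
proof (induction B rule: finite_induct)
  case empty
  have "\<pi> (0 *\<^sub>R 0) = 0 * \<pi> 0"
    using scale subspace_0[OF M] by blast
  then show ?case by simp
next
  case (insert w B)
  have "(\<Sum>v\<in>B. u v *\<^sub>R v) \<in> M" "u w *\<^sub>R w \<in> M"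
    using insert M by (auto intro: subspace_sum subspace_scale)
  with insert add scale show ?case by simp
qed

lemma minimizing_sequence:
  fixes f :: "'b \<Rightarrow> real"
  assumes "P \<noteq> {}" and "bdd_below (f ` P)"
  obtains x where "\<forall>n. x n \<in> P" "(\<lambda>n. f (x n)) \<longlonglongrightarrow> Inf (f ` P)"
proof -
  have "Inf (f ` P) \<in> closure (f ` P)"
    using assms by (intro closure_contains_Inf) auto
  then obtain y where "\<forall>n. y n \<in> f ` P" "y \<longlonglongrightarrow> Inf (f ` P)"
    unfolding closure_sequential by blast
  then have "\<forall>n. \<exists>x\<in>P. y n = f x"
    by blast
  then obtain x where x: "\<forall>n. x n \<in> P \<and> y n = f (x n)"
    by metis
  then have "(\<lambda>n. f (x n)) = y"
    by auto
  with x \<open>y \<longlonglongrightarrow> Inf (f ` P)\<close> show thesis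
    by (intro that) auto
qed

lemma asymptotic_cone_sequential:
  assumes "\<forall>n. t n \<ge> 0" "t \<longlonglongrightarrow> 0" "\<forall>n. Y n \<in> A" "(\<lambda>n. t n *\<^sub>R Y n) \<longlonglongrightarrow> W"
  shows "W \<in> asymptotic_cone A"
  unfolding asymptotic_cone_def
proof (intro InterI, clarify)
  fix \<epsilon> :: real assume "\<epsilon> > 0"
  then have "\<forall>\<^sub>F n in sequentially. t n < \<epsilon>"
    using assms(2) by (rule order_tendstoD(2)[rotated])
  then have "\<forall>\<^sub>F n in sequentially. t n *\<^sub>R Y n \<in> closure {l *\<^sub>R X | l X. l \<in> {0..\<epsilon>} \<and> X \<in> A}"
    by eventually_elim (use assms(1,3) in \<open>fastforce intro!: closure_subset[THEN subsetD]\<close>)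
  then show "W \<in> closure {l *\<^sub>R X | l X. l \<in> {0..\<epsilon>} \<and> X \<in> A}"
    using Lim_in_closed_set[OF closed_closure _ sequentially_bot assms(4)] by blast
qed

lemma optimal_payoff_of_convergent_coefficients:
  fixes B :: "'a::{real_vector,topological_space} set"
  assumes tvs: "locally_convex_tvs TYPE('a)" and "closed A" and B: "finite B"
    and \<pi>_lincomb: "\<And>u. \<pi> (\<Sum>v\<in>B. u v *\<^sub>R v) = (\<Sum>v\<in>B. u v * \<pi> v)"
    and feasible: "\<forall>n. X + (\<Sum>v\<in>B. c n v *\<^sub>R v) \<in> A"
    and minimizing: "(\<lambda>n. \<pi> (\<Sum>v\<in>B. c n v *\<^sub>R v)) \<longlonglongrightarrow> rho A (span B) \<pi> X"
    and coeff: "\<forall>v\<in>B. (\<lambda>n. c n v) \<longlonglongrightarrow> d v"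
  shows "(\<Sum>v\<in>B. d v *\<^sub>R v) \<in> optimal_payoffs A (span B) \<pi> X"
proof -
  have "(\<lambda>n. X + (\<Sum>v\<in>B. c n v *\<^sub>R v)) \<longlonglongrightarrow> X + (\<Sum>v\<in>B. d v *\<^sub>R v)"
    by (intro tendsto_add_tvs[OF tvs] tendsto_const tendsto_lincomb_tvs[OF tvs B coeff])
  then have "X + (\<Sum>v\<in>B. d v *\<^sub>R v) \<in> A"
    by (rule Lim_in_closed_set[OF \<open>closed A\<close> always_eventually[OF feasible] sequentially_bot])
  moreover have "(\<lambda>n. \<pi> (\<Sum>v\<in>B. c n v *\<^sub>R v)) \<longlonglongrightarrow> \<pi> (\<Sum>v\<in>B. d v *\<^sub>R v)"
    unfolding \<pi>_lincomb using coeff by (intro tendsto_sum tendsto_mult tendsto_const) auto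
  then have "\<pi> (\<Sum>v\<in>B. d v *\<^sub>R v) = rho A (span B) \<pi> X"
    using minimizing LIMSEQ_unique by blast
  ultimately show ?thesis
    unfolding optimal_payoffs_def by (auto intro: span_sum span_scale span_base)
qed

lemma scalable_good_deal_of_unbounded_coefficients:
  fixes B :: "'a::{real_vector,topological_space} set"
  assumes tvs: "locally_convex_tvs TYPE('a)" and B: "finite B" "independent B"
    and \<pi>_lincomb: "\<And>u. \<pi> (\<Sum>v\<in>B. u v *\<^sub>R v) = (\<Sum>v\<in>B. u v * \<pi> v)"
    and feasible: "\<forall>n. X + (\<Sum>v\<in>B. c n v *\<^sub>R v) \<in> A"
    and bounded_price: "Bseq (\<lambda>n. \<pi> (\<Sum>v\<in>B. c n v *\<^sub>R v))"
    and t: "\<forall>n. t n > 0" "t \<longlonglongrightarrow> 0"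
    and coeff: "\<forall>v\<in>B. (\<lambda>n. t n * c (\<sigma> n) v) \<longlonglongrightarrow> d v" and "\<exists>v\<in>B. d v \<noteq> 0"
  shows "(\<Sum>v\<in>B. d v *\<^sub>R v) \<in> asymptotic_cone A \<inter> {Z \<in> span B. \<pi> Z = 0} - {0}"
proof -
  define W where "W = (\<Sum>v\<in>B. d v *\<^sub>R v)"
  have "W \<noteq> 0"
    using independentD[OF B(2) B(1) order_refl, of d] \<open>\<exists>v\<in>B. d v \<noteq> 0\<close> by (auto simp: W_def)
  have "(\<lambda>n. t n *\<^sub>R X + (\<Sum>v\<in>B. (t n * c (\<sigma> n) v) *\<^sub>R v)) \<longlonglongrightarrow> 0 *\<^sub>R X + W"
    unfolding W_def using t(2) coeff
    by (intro tendsto_add_tvs[OF tvs] tendsto_scaleR_tvs[OF tvs] tendsto_const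
        tendsto_lincomb_tvs[OF tvs B(1)])
  then have "(\<lambda>n. t n *\<^sub>R (X + (\<Sum>v\<in>B. c (\<sigma> n) v *\<^sub>R v))) \<longlonglongrightarrow> W"
    by (simp add: scaleR_right_distrib scaleR_sum_right)
  then have "W \<in> asymptotic_cone A"
    using t(1) feasible by (intro asymptotic_cone_sequential[OF _ t(2)]) (auto intro: less_imp_le)
  obtain K where K: "\<And>n. \<bar>\<pi> (\<Sum>v\<in>B. c n v *\<^sub>R v)\<bar> \<le> K"
    using bounded_price[unfolded Bseq_def real_norm_def] by blast
  have "\<bar>t n * \<pi> (\<Sum>v\<in>B. c (\<sigma> n) v *\<^sub>R v)\<bar> \<le> \<bar>t n\<bar> * K" for n
    unfolding abs_mult by (intro mult_left_mono K abs_ge_zero)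
  then have "(\<lambda>n. t n * \<pi> (\<Sum>v\<in>B. c (\<sigma> n) v *\<^sub>R v)) \<longlonglongrightarrow> 0"
    by (intro tendsto_0_le[OF t(2), where K = K] always_eventually) simp
  moreover have "t n * \<pi> (\<Sum>v\<in>B. c (\<sigma> n) v *\<^sub>R v) = (\<Sum>v\<in>B. (t n * c (\<sigma> n) v) * \<pi> v)" for n
    unfolding \<pi>_lincomb by (simp add: sum_distrib_left mult.assoc)
  moreover have "(\<lambda>n. \<Sum>v\<in>B. (t n * c (\<sigma> n) v) * \<pi> v) \<longlonglongrightarrow> \<pi> W"
    unfolding W_def \<pi>_lincomb using coeff by (intro tendsto_sum tendsto_mult tendsto_const) auto
  ultimately have "\<pi> W = 0"
    using LIMSEQ_unique by fastforce
  with \<open>W \<noteq> 0\<close> \<open>W \<in> asymptotic_cone A\<close> show ?thesis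
    unfolding W_def by (auto intro: span_sum span_scale span_base)
qed

lemma minimizing_coefficients:
  fixes B :: "'a::real_vector set"
  assumes B: "finite B"
    and "{\<pi> Z | Z. Z \<in> span B \<and> X + Z \<in> A} \<noteq> {}" "bdd_below {\<pi> Z | Z. Z \<in> span B \<and> X + Z \<in> A}"
  obtains c where "\<forall>n. X + (\<Sum>v\<in>B. c n v *\<^sub>R v) \<in> A"
    "(\<lambda>n. \<pi> (\<Sum>v\<in>B. c n v *\<^sub>R v)) \<longlonglongrightarrow> rho A (span B) \<pi> X"
proof -
  have "{Z \<in> span B. X + Z \<in> A} \<noteq> {}" "bdd_below (\<pi> ` {Z \<in> span B. X + Z \<in> A})"
    using assms(2,3) by (auto simp: setcompr_eq_image)
  then obtain Zs where Zs: "\<forall>n. Zs n \<in> {Z \<in> span B. X + Z \<in> A}"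
    and "(\<lambda>n. \<pi> (Zs n)) \<longlonglongrightarrow> Inf (\<pi> ` {Z \<in> span B. X + Z \<in> A})"
    by (rule minimizing_sequence)
  then have Zs_lim: "(\<lambda>n. \<pi> (Zs n)) \<longlonglongrightarrow> rho A (span B) \<pi> X"
    by (simp add: rho_def setcompr_eq_image)
  have "\<forall>n. \<exists>u. Zs n = (\<Sum>v\<in>B. u v *\<^sub>R v)"
    using Zs unfolding span_finite[OF B] by blast
  then obtain c where c: "\<forall>n. Zs n = (\<Sum>v\<in>B. c n v *\<^sub>R v)"
    by (rule choice[THEN exE])
  show thesis
  proof (rule that)
    show "\<forall>n. X + (\<Sum>v\<in>B. c n v *\<^sub>R v) \<in> A"
      using Zs c by simp
    show "(\<lambda>n. \<pi> (\<Sum>v\<in>B. c n v *\<^sub>R v)) \<longlonglongrightarrow> rho A (span B) \<pi> X"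
      using Zs_lim c by simp
  qed
qed

lemma optimal_payoff_or_scalable_good_deal:
  fixes B :: "'a::{real_vector,topological_space} set"
  assumes tvs: "locally_convex_tvs TYPE('a)" and "closed A" and B: "finite B" "independent B"
    and \<pi>_lincomb: "\<And>u. \<pi> (\<Sum>v\<in>B. u v *\<^sub>R v) = (\<Sum>v\<in>B. u v * \<pi> v)"
    and feasible: "\<forall>n. X + (\<Sum>v\<in>B. c n v *\<^sub>R v) \<in> A"
    and minimizing: "(\<lambda>n. \<pi> (\<Sum>v\<in>B. c n v *\<^sub>R v)) \<longlonglongrightarrow> rho A (span B) \<pi> X"
  shows "optimal_payoffs A (span B) \<pi> X \<noteq> {} \<or>
    (\<exists>W. W \<in> asymptotic_cone A \<inter> {Z \<in> span B. \<pi> Z = 0} - {0})"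
proof (cases "\<exists>K. \<forall>n. \<forall>v\<in>B. \<bar>c n v\<bar> \<le> K")
  case True
  then obtain K where "\<forall>n. \<forall>v\<in>B. \<bar>c n v\<bar> \<le> K"
    by blast
  then obtain r d where r: "strict_mono r" and d: "\<forall>v\<in>B. (\<lambda>n. c (r n) v) \<longlonglongrightarrow> d v"
    by (rule convergent_subseq_finite_family[OF B(1)])
  have "(\<lambda>n. \<pi> (\<Sum>v\<in>B. c (r n) v *\<^sub>R v)) \<longlonglongrightarrow> rho A (span B) \<pi> X"
    using LIMSEQ_subseq_LIMSEQ[OF minimizing r] by (simp add: o_def)
  moreover have "\<forall>n. X + (\<Sum>v\<in>B. c (r n) v *\<^sub>R v) \<in> A"
    using feasible by simp
  ultimately have "(\<Sum>v\<in>B. d v *\<^sub>R v) \<in> optimal_payoffs A (span B) \<pi> X"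
    by (intro optimal_payoff_of_convergent_coefficients[OF tvs \<open>closed A\<close> B(1) \<pi>_lincomb _ _ d])
  then show ?thesis
    by blast
next
  case False
  have "Bseq (\<lambda>n. \<pi> (\<Sum>v\<in>B. c n v *\<^sub>R v))"
    using minimizing by (intro convergent_imp_Bseq convergentI)
  moreover obtain \<sigma> t d where "\<forall>n. t n > 0" "t \<longlonglongrightarrow> 0"
    "\<forall>v\<in>B. (\<lambda>n. t n * c (\<sigma> n) v) \<longlonglongrightarrow> d v" "\<exists>v\<in>B. d v \<noteq> 0"
    using False by (rule unbounded_finite_family_normalized_limit[OF B(1)])
  ultimately have "(\<Sum>v\<in>B. d v *\<^sub>R v) \<in> asymptotic_cone A \<inter> {Z \<in> span B. \<pi> Z = 0} - {0}"
    by (rule scalable_good_deal_of_unbounded_coefficients[OF tvs B \<pi>_lincomb feasible])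
  then show ?thesis
    by blast
qed

theorem mainTheorem8:
  fixes ge :: "'a::{real_vector, t2_space, first_countable_topology} \<Rightarrow> 'a \<Rightarrow> bool"
    and M A :: "'a set" and \<pi> :: "'a \<Rightarrow> real"
  assumes tvs: "locally_convex_tvs TYPE('a)"
    and po: "partial_order_on UNIV {(x, y). ge y x}"
    and M_sub: "subspace M"
    and M_fin: "\<exists>B. finite B \<and> M = span B"
    and M_dim: "dim M > 1"
    and \<pi>_add: "\<forall>Z\<in>M. \<forall>W\<in>M. \<pi> (Z + W) = \<pi> Z + \<pi> W"
    and \<pi>_scale: "\<forall>Z\<in>M. \<forall>c::real. \<pi> (c *\<^sub>R Z) = c * \<pi> Z"
    and A1: "\<exists>U\<in>M \<inter> pos_cone ge. \<pi> U = 1"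
    and A2_proper: "A \<subset> UNIV"
    and A2_closed: "closed A"
    and A2_zero: "0 \<in> A"
    and A2_mono: "\<forall>X\<in>A. \<forall>P\<in>pos_cone ge. X + P \<in> A"
    and A3_finite: "\<forall>X. {\<pi> Z | Z. Z \<in> M \<and> X + Z \<in> A} \<noteq> {} \<and>
                        bdd_below {\<pi> Z | Z. Z \<in> M \<and> X + Z \<in> A}"
    and A3_cont: "continuous_on UNIV (rho A M \<pi>)"
    and no_sgd: "asymptotic_cone A \<inter> {Z \<in> M. \<pi> Z = 0} = {0}"
  shows "\<forall>X. optimal_payoffs A M \<pi> X \<noteq> {}"
proof
  fix X
  from M_fin obtain B0 where "finite B0" "M = span B0"
    by blast
  then obtain B where B: "finite B" "independent B" and M: "M = span B"
    by (rule finite_basis_of_span)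
  have "B \<subseteq> M"
    unfolding M by (rule span_superset)
  note \<pi>_lincomb = sum_scaleR_linear_on_span[OF M_sub \<pi>_add \<pi>_scale B(1) this]
  have "{\<pi> Z | Z. Z \<in> span B \<and> X + Z \<in> A} \<noteq> {}" "bdd_below {\<pi> Z | Z. Z \<in> span B \<and> X + Z \<in> A}"
    using A3_finite M by simp_all
  then obtain c where "\<forall>n. X + (\<Sum>v\<in>B. c n v *\<^sub>R v) \<in> A"
    "(\<lambda>n. \<pi> (\<Sum>v\<in>B. c n v *\<^sub>R v)) \<longlonglongrightarrow> rho A (span B) \<pi> X"
    by (rule minimizing_coefficients[OF B(1)])
  then have "optimal_payoffs A M \<pi> X \<noteq> {} \<or> (\<exists>W. W \<in> asymptotic_cone A \<inter> {Z \<in> M. \<pi> Z = 0} - {0})"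
    unfolding M by (rule optimal_payoff_or_scalable_good_deal[OF tvs A2_closed B \<pi>_lincomb])
  with no_sgd show "optimal_payoffs A M \<pi> X \<noteq> {}"
    by blast
qed

end
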